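(* Let $X$ be a well-ordered set, $\Omega=\{P\}$ with $P$ unary, $\lambda\in K$, and equip $\mathfrak{S}(X)$ with the order $(1)$. Then $$S=\{P(x)P(y)-P(P(x)y)-P(xP(y))-\lambda P(xy)\mid x,y\in\mathfrak{S}(X)\}$$ is a Gröbner–Shirshov basis in $K\langle X;P\rangle$.
   Context: General setup. $K$ is a commutative ring with unit, $X$ a set, and $\Omega=\bigcup_{n\ge1}\Omega_n$ a set of operation symbols, $\Omega_n$ being the $n$-ary ones. For a set $A$ let $\Omega(A)=\{\delta(u_1,\dots,u_t)\mid t\ge1,\ \delta\in\Omega_t,\ u_i\in A\}$. $S(Y)$ is the free semigroup and $Y^*$ the free monoid on $Y$. $\mathfrak{S}_0=S(X)$, $\mathfrak{S}_n=S(X\cup\Omega(\mathfrak{S}_{n-1}))$, $\mathfrak{S}(X)=\bigcup_n\mathfrak{S}_n$ ($\Omega$-words); the depth $dep(u)$ is the least $n$ with $u\in\mathfrak{S}_n$. $K\langle X;\Omega\rangle$ is the free $K$-module on $\mathfrak{S}(X)$ with concatenation product and multilinearly extended operators (free associative algebra with operators $\Omega$); here $K\langle X;P\rangle$ denotes it for $\Omega=\{P\}$. Prime $\Omega$-words are elements of $X\cup\Omega(\mathfrak{S}(X))$; $bre(u)$ is the number of prime factors of $u$. $\mathfrak{S}^\star(X)$ is the set of elements of $\mathfrak{S}(X\cup\{\star\})$ with exactly one $\star$, and $u|_s$ is substitution of $s$ for $\star$. Monomial ordering: well order on $\mathfrak{S}(X)$ with $w>v\Rightarrow u|_w>u|_v$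 for $u\in\mathfrak{S}^\star(X)$. $\bar f$ = leading word; monic = leading coefficient $1$. Compositions of monic $f,g$: intersection $(f,g)_w=fa-bg$ when $w=\bar fa=b\bar g$, $a,b\in\mathfrak{S}(X)$, $bre(w)<bre(\bar f)+bre(\bar g)$; including $(f,g)_w=f-u|_g$ when $w=\bar f=u|_{\bar g}$, $u\in\mathfrak{S}^\star(X)$. $p\equiv q\ \mathrm{mod}(S,w)$ means $p-q=\sum\alpha_iu_i|_{s_i}$ with $s_i\in S$, $u_i\in\mathfrak{S}^\star(X)$, $u_i|_{\overline{s_i}}<w$. $S$ is a Gröbner–Shirshov basis if all compositions of elements of $S$ are $\equiv0\ \mathrm{mod}(S,w)$. Order (1): Let $X$ and $\Omega$ be well ordered and order $X^*$ by deg-lex (first by length, then lexicographically). Each $u\in\mathfrak{S}(X)$ is uniquely written $u=u_0\,\delta_1(\overrightarrow{x_1})\,u_1\cdots\delta_t(\overrightarrow{x_t})\,u_t$ with $t\ge0$, $u_i\in X^*$, $\delta_k\in\Omega_{i_k}$, $\overrightarrow{x_k}\in\mathfrak{S}(X)^{i_k}$. Set $wt(u)=(t,\delta_1,\overrightarrow{x_1},\dots,\delta_t,\overrightarrow{x_t},u_0,\dots,u_t)$, and define $u>v$ iff $wt(u)>wt(v)$ lexicographically, where integers are compared as usual, operators by the order of $\Omega$, words of $X^*$ by deg-lex, and tuples of $\Omega$-words lexicographically using the order being defined (by induction on $dep(u)+dep(v)$). *)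

theory Defs
  imports Main
begin

text \<open>A prime word is a letter of X or P applied to a word; a word is a list of prime
  words. Well-formedness (wfw) enforces that all words are nonempty (free semigroup).\<close>

datatype 'x prim = Ltr 'x | Pw "'x prim list"

type_synonym 'x word = "'x prim list"

fun wfp :: "'x prim \<Rightarrow> bool" where
  "wfp (Ltr x) = True"
| "wfp (Pw u) = (u \<noteq> [] \<and> (\<forall>p\<in>set u. wfp p))"

definition wfw :: "'x word \<Rightarrow> bool" where
  "wfw u = (u \<noteq> [] \<and> (\<forall>p\<in>set u. wfp p))"

definition bre :: "'x word \<Rightarrow> nat" where
  "bre u = length u"

text \<open>u = u0 P(x1) u1 ... P(xt) ut: tcount = t, args = [x1,...,xt], xsegs = [u0,...,ut]\<close>

fun tcount :: "'x word \<Rightarrow> nat" where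
  "tcount [] = 0"
| "tcount (Ltr x # u) = tcount u"
| "tcount (Pw v # u) = Suc (tcount u)"

fun args :: "'x word \<Rightarrow> 'x word list" where
  "args [] = []"
| "args (Ltr x # u) = args u"
| "args (Pw v # u) = v # args u"

fun xsegs :: "'x word \<Rightarrow> 'x list list" where
  "xsegs [] = [[]]"
| "xsegs (Ltr x # u) = (case xsegs u of [] \<Rightarrow> [[x]] | s # ss \<Rightarrow> (x # s) # ss)"
| "xsegs (Pw v # u) = [] # xsegs u"

definition tlex :: "('a \<Rightarrow> 'a \<Rightarrow> bool) \<Rightarrow> 'a list \<Rightarrow> 'a list \<Rightarrow> bool" where
  "tlex r xs ys = (length xs = length ys \<and>
     (\<exists>i<length xs. take i xs = take i ys \<and> r (xs ! i) (ys ! i)))"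

definition dlless :: "'x::wellorder list \<Rightarrow> 'x list \<Rightarrow> bool" where
  "dlless xs ys = (length xs < length ys \<or>
     (length xs = length ys \<and> (\<exists>i<length xs. take i xs = take i ys \<and> xs ! i < ys ! i)))"

text \<open>wless u v means u < v in order (1), defined by induction on depth
  (the only operator is P, so operator comparisons are trivial).\<close>
inductive wless :: "'x::wellorder word \<Rightarrow> 'x word \<Rightarrow> bool" where
  tless: "tcount u < tcount v \<Longrightarrow> wless u v"
| argless: "tcount u = tcount v \<Longrightarrow> length (args u) = length (args v) \<Longrightarrow>
     i < length (args u) \<Longrightarrow> take i (args u) = take i (args v) \<Longrightarrow>
     wless (args u ! i) (args v ! i) \<Longrightarrow> wless u v"
| segless: "tcount u = tcount v \<Longrightarrow> args u = args v \<Longrightarrow>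
     tlex dlless (xsegs u) (xsegs v) \<Longrightarrow> wless u v"

type_synonym ('x, 'k) poly = "'x word \<Rightarrow> 'k"

definition supp :: "('x, 'k::zero) poly \<Rightarrow> 'x word set" where
  "supp p = {w. p w \<noteq> 0}"

definition mon :: "'x word \<Rightarrow> ('x, 'k::{zero,one}) poly" where
  "mon u = (\<lambda>w. if w = u then 1 else 0)"

definition pmul :: "('x, 'k::comm_ring_1) poly \<Rightarrow> ('x, 'k) poly \<Rightarrow> ('x, 'k) poly" where
  "pmul p q = (\<lambda>w. \<Sum>i\<le>length w. p (take i w) * q (drop i w))"

definition lead :: "('x::wellorder, 'k::zero) poly \<Rightarrow> 'x word" where
  "lead p = (THE w. w \<in> supp p \<and> (\<forall>v\<in>supp p. v \<noteq> w \<longrightarrow> wless v w))"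

definition monic :: "('x::wellorder, 'k::comm_ring_1) poly \<Rightarrow> bool" where
  "monic p = (finite (supp p) \<and> supp p \<noteq> {} \<and> p (lead p) = 1)"

text \<open>Star-words: words over X + {star} (Ltr None is the star) with exactly one star.\<close>
fun nstar :: "'x option prim \<Rightarrow> nat" where
  "nstar (Ltr None) = 1"
| "nstar (Ltr (Some x)) = 0"
| "nstar (Pw u) = sum_list (map nstar u)"

definition starw :: "'x option word \<Rightarrow> bool" where
  "starw u = (wfw u \<and> sum_list (map nstar u) = 1)"

fun substp :: "'x option prim \<Rightarrow> 'x word \<Rightarrow> 'x word" where
  "substp (Ltr None) s = s"
| "substp (Ltr (Some x)) s = [Ltr x]"
| "substp (Pw u) s = [Pw (concat (map (\<lambda>p. substp p s) u))]"

definition substw :: "'x option word \<Rightarrow> 'x word \<Rightarrow> 'x word" where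
  "substw u s = concat (map (\<lambda>p. substp p s) u)"

definition substpoly :: "'x option word \<Rightarrow> ('x, 'k::comm_ring_1) poly \<Rightarrow> ('x, 'k) poly" where
  "substpoly u f = (\<lambda>w. \<Sum>v\<in>{v\<in>supp f. substw u v = w}. f v)"

definition cong_mod :: "('x::wellorder, 'k::comm_ring_1) poly set \<Rightarrow> 'x word \<Rightarrow>
    ('x, 'k) poly \<Rightarrow> ('x, 'k) poly \<Rightarrow> bool" where
  "cong_mod S w p q = (\<exists>ts :: ('k \<times> 'x option word \<times> ('x, 'k) poly) list.
     (\<forall>(a, u, s)\<in>set ts. s \<in> S \<and> starw u \<and> wless (substw u (lead s)) w) \<and>
     (\<forall>v. p v - q v = sum_list (map (\<lambda>(a, u, s). a * substpoly u s v) ts)))"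

definition GSB :: "('x::wellorder, 'k::comm_ring_1) poly set \<Rightarrow> bool" where
  "GSB S = (\<forall>f\<in>S. \<forall>g\<in>S. monic f \<and> monic g \<longrightarrow>
     (\<forall>w a b. wfw a \<and> wfw b \<and> w = lead f @ a \<and> w = b @ lead g \<and>
        bre w < bre (lead f) + bre (lead g) \<longrightarrow>
        cong_mod S w (\<lambda>v. pmul f (mon a) v - pmul (mon b) g v) (\<lambda>_. 0)) \<and>
     (\<forall>w u. starw u \<and> w = lead f \<and> w = substw u (lead g) \<longrightarrow>
        cong_mod S w (\<lambda>v. f v - substpoly u g v) (\<lambda>_. 0)))"

definition rbrel :: "'k::comm_ring_1 \<Rightarrow> 'x word \<Rightarrow> 'x word \<Rightarrow> ('x, 'k) poly" where
  "rbrel lam x y = (\<lambda>w. mon [Pw x, Pw y] w - mon [Pw (Pw x # y)] w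
      - mon [Pw (x @ [Pw y])] w - lam * mon [Pw (x @ y)] w)"

end

theory Submission
  imports Defs
begin

(* Every relation f = P(x)P(y) - P(P(x)y) - P(xP(y)) - lam P(xy) of S has
   leading word P(x)P(y), the only monomial with two occurrences of P at top level.
   Hence only two kinds of compositions arise:
   - intersections P(x)P(y)P(z) of lead(f) = P(x)P(y) with lead(g) = P(y)P(z); the
     composition f P(z) - P(x) g is rewritten as a combination
     of eight elements of S placed in contexts whose leading words have at most two
     top-level P's, hence lie below the three-P word P(x)P(y)P(z);
   - inclusions P(x)P(y) = u|P(x')P(y'); then either u is the bare star (the composition
     is 0), or u = P(v1)P(v2) with the star inside v1 or v2, and f - u|g is a combination
     of three elements of S and three substitutions of g into contexts with one P.
   The file first develops the order (counting top-level P's, monotonicity of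
   substitution into a star-word), then the polynomial calculus needed for the relations
   (leading word, products with monomials, substitution), then the two compositions;
   the theorem is the combination of these two lemmas. *)

section \<open>Counting top-level operators and the order (1)\<close>

lemma tcount_append [simp]: "tcount (a @ b) = tcount a + tcount b"
  by (induction a rule: tcount.induct) auto

lemma args_append [simp]: "args (a @ b) = args a @ args b"
  by (induction a rule: args.induct) auto

text \<open>The number of top-level operators is the first component of the weight, so it is
  weakly monotone along the order.\<close>
lemma wless_tcount_le: "wless u v \<Longrightarrow> tcount u \<le> tcount v"
  by (induction rule: wless.induct) auto

lemma tcount_le_length: "tcount u \<le> length u"
  by (induction u rule: tcount.induct) auto

text \<open>A word with fewer prime factors than v has top-level operators lies below v; this
  is how all the lower terms of the compositions are recognised.\<close>
lemma wless_if_short: "length u < tcount v \<Longrightarrow> wless u v"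
  using tcount_le_length[of u] by (intro wless.tless) simp

text \<open>A relation between words that is preserved under any left and right multiplication:
  either fewer top-level operators, or two single P-primes with smaller arguments.\<close>
definition ctx_less :: "'x::wellorder word \<Rightarrow> 'x word \<Rightarrow> bool" where
  "ctx_less A B \<longleftrightarrow> tcount A < tcount B \<or> (\<exists>a b. A = [Pw a] \<and> B = [Pw b] \<and> wless a b)"

lemma wless_in_context: "ctx_less A B \<Longrightarrow> wless (C @ A @ D) (C @ B @ D)"
  unfolding ctx_less_def
proof (elim disjE exE conjE)
  assume "tcount A < tcount B"
  then show ?thesis by (intro wless.tless) simp
next
  fix a b assume AB: "A = [Pw a]" "B = [Pw b]" and "wless a b"
  show ?thesis unfolding AB
    by (rule wless.argless[where i = "length (args C)"]) (use \<open>wless a b\<close> in auto)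
qed

section \<open>Substitution into star-words\<close>

abbreviation nstars :: "'x option word \<Rightarrow> nat" where
  "nstars u \<equiv> sum_list (map nstar u)"

lemma substw_Nil [simp]: "substw [] s = []"
  by (simp add: substw_def)

lemma substw_Cons [simp]: "substw (p # u) s = substp p s @ substw u s"
  by (simp add: substw_def)

lemma substw_append [simp]: "substw (u @ v) s = substw u s @ substw v s"
  by (simp add: substw_def)

lemma substp_Pw [simp]: "substp (Pw u) s = [Pw (substw u s)]"
  by (simp add: substw_def)

declare substp.simps(3) [simp del]

lemma substp_starfree: "nstar p = 0 \<Longrightarrow> substp p s = substp p s'"
proof (induction p)
  case (Ltr c)
  then show ?case by (cases c) auto
next
  case (Pw u)
  then have "map (\<lambda>p. substp p s) u = map (\<lambda>p. substp p s') u"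
    by (intro map_cong) auto
  then have "substw u s = substw u s'"
    by (simp only: substw_def)
  then show ?case by simp
qed

lemma substw_starfree: "nstars u = 0 \<Longrightarrow> substw u s = substw u s'"
  by (induction u) (auto intro: substp_starfree)

text \<open>A word with exactly one star is a fixed left part, a prime factor carrying the star,
  and a fixed right part; this reduces statements about star-words to prime factors.\<close>
lemma star_split:
  "nstars u = 1 \<Longrightarrow> \<exists>q\<in>set u. nstar q = 1 \<and> (\<exists>L R. \<forall>s. substw u s = L @ substp q s @ R)"
proof (induction u)
  case Nil
  then show ?case by simp
next
  case (Cons p u)
  show ?case
  proof (cases "nstar p = 0")
    case True
    with Cons obtain q L R where q: "q \<in> set u" "nstar q = 1"
      and split: "\<forall>s. substw u s = L @ substp q s @ R"
      by auto
    have "substw (p # u) s = (substp p [] @ L) @ substp q s @ R" for s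
      using split substp_starfree[OF True, of s "[]"] by simp
    with q(2) have "nstar q = 1 \<and> (\<exists>L R. \<forall>s. substw (p # u) s = L @ substp q s @ R)"
      by blast
    moreover have "q \<in> set (p # u)" using q(1) by simp
    ultimately show ?thesis by blast
  next
    case False
    have "nstar p + nstars u = 1" using Cons.prems by simp
    with False have p: "nstar p = 1" and u0: "nstars u = 0" by linarith+
    have "substw (p # u) s = [] @ substp p s @ substw u []" for s
      using substw_starfree[OF u0, of s "[]"] by simp
    with p have "nstar p = 1 \<and> (\<exists>L R. \<forall>s. substw (p # u) s = L @ substp p s @ R)"
      by blast
    then show ?thesis by simp
  qed
qed

text \<open>Substitution into a star-word is injective, so a substituted polynomial keeps its
  coefficients.\<close>
lemma substp_inj: "nstar q = 1 \<Longrightarrow> substp q a = substp q b \<Longrightarrow> a = b"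
proof (induction q)
  case (Ltr c)
  then show ?case by (cases c) auto
next
  case (Pw u)
  then obtain q L R where q: "q \<in> set u" "nstar q = 1"
    and split: "\<forall>s. substw u s = L @ substp q s @ R"
    using star_split[of u] by auto
  from Pw.prems(2) have "substw u a = substw u b" by simp
  with split have "substp q a = substp q b" by simp
  with q show ?case by (rule Pw.IH)
qed

lemma substw_inj:
  assumes "nstars u = 1"
  shows "inj (substw u)"
proof (rule injI)
  fix a b assume eq: "substw u a = substw u b"
  obtain q L R where q: "nstar q = 1" and split: "\<forall>s. substw u s = L @ substp q s @ R"
    using star_split[OF assms] by blast
  from eq split have "substp q a = substp q b" by simp
  with q show "a = b" by (rule substp_inj)
qed

text \<open>Substitution is monotone: a word with more top-level operators substituted into a
  star-word gives a larger word.  This bounds the substituted lower terms of a relation.\<close>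
lemma substp_mono: "nstar q = 1 \<Longrightarrow> tcount h < tcount H \<Longrightarrow> ctx_less (substp q h) (substp q H)"
proof (induction q)
  case (Ltr c)
  then show ?case by (cases c) (auto simp: ctx_less_def)
next
  case (Pw u)
  then obtain q L R where q: "q \<in> set u" "nstar q = 1"
    and split: "\<forall>s. substw u s = L @ substp q s @ R"
    using star_split[of u] by auto
  from q Pw.prems(2) have "ctx_less (substp q h) (substp q H)" by (rule Pw.IH)
  then have "wless (L @ substp q h @ R) (L @ substp q H @ R)" by (rule wless_in_context)
  with split have "wless (substw u h) (substw u H)" by simp
  then show ?case by (simp add: ctx_less_def)
qed

lemma substw_mono:
  assumes "nstars u = 1" and "tcount h < tcount H"
  shows "wless (substw u h) (substw u H)"
proof -
  obtain q L R where q: "nstar q = 1" and split: "\<forall>s. substw u s = L @ substp q s @ R"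
    using star_split[OF assms(1)] by blast
  from q assms(2) have "ctx_less (substp q h) (substp q H)" by (rule substp_mono)
  then have "wless (L @ substp q h @ R) (L @ substp q H @ R)" by (rule wless_in_context)
  with split show ?thesis by simp
qed

lemma wf_substp: "wfp p \<Longrightarrow> wfw s \<Longrightarrow> substp p s \<noteq> [] \<and> (\<forall>q\<in>set (substp p s). wfp q)"
proof (induction p)
  case (Ltr c)
  then show ?case by (cases c) (auto simp: wfw_def)
next
  case (Pw u)
  then show ?case by (auto simp: substw_def neq_Nil_conv)
qed

lemma wfw_substw: "wfw u \<Longrightarrow> wfw s \<Longrightarrow> wfw (substw u s)"
  using wf_substp by (auto simp: wfw_def substw_def neq_Nil_conv)

lemma substp_nonempty: "s \<noteq> [] \<Longrightarrow> substp p s \<noteq> []"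
  by (induction p s rule: substp.induct) auto

lemma length_substw: "s \<noteq> [] \<Longrightarrow> length u \<le> length (substw u s)"
proof (induction u)
  case (Cons p u)
  then have "substp p s \<noteq> []" by (simp add: substp_nonempty)
  with Cons show ?case by (cases "substp p s") auto
qed simp

text \<open>Ordinary words embed as star-free star-words; this is how contexts such as
  P(\<star> z) or P(x \<star>) are built.\<close>
definition lift :: "'x word \<Rightarrow> 'x option word" where
  "lift u = map (map_prim Some) u"

lemma lift_prim:
  "substp (map_prim Some p) s = [p] \<and> nstar (map_prim Some p) = 0 \<and> (wfp p \<longrightarrow> wfp (map_prim Some p))"
proof (induction p)
  case (Pw u)
  then have "substw (map (map_prim Some) u) s = u" "nstars (map (map_prim Some) u) = 0"
    by (induction u) auto
  with Pw show ?case by auto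
qed simp

lemma substw_lift [simp]: "substw (lift u) s = u"
  by (induction u) (auto simp: lift_def lift_prim)

lemma nstars_lift [simp]: "nstars (lift u) = 0"
  by (induction u) (auto simp: lift_def lift_prim)

lemma wfp_lift: "\<forall>p\<in>set u. wfp p \<Longrightarrow> \<forall>p\<in>set (lift u). wfp p"
  by (induction u) (auto simp: lift_def lift_prim)

lemma two_prime_instance:
  assumes "starw u" and "substw u [Pw x', Pw y'] = [Pw x, Pw y]"
  shows "u = [Ltr None] \<or> (\<exists>v1 v2. u = [Pw v1, Pw v2])"
proof -
  let ?W = "[Pw x', Pw y']"
  have "u \<noteq> []" using assms(1) by (simp add: starw_def wfw_def)
  moreover have "length u \<le> 2"
    using length_substw[of ?W u] assms(2) by simp
  ultimately consider q where "u = [q]" | q1 q2 where "u = [q1, q2]"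
    by (cases u rule: remdups_adj.cases) auto
  then show ?thesis
  proof cases
    case (1 q)
    with assms(2) show ?thesis
      by (cases q rule: nstar.cases) auto
  next
    case (2 q1 q2)
    with assms(2) have "substp q1 ?W @ substp q2 ?W = [Pw x, Pw y]" by simp
    moreover have "substp q1 ?W \<noteq> []" "substp q2 ?W \<noteq> []" by (simp_all add: substp_nonempty)
    ultimately have "substp q1 ?W = [Pw x]" and "substp q2 ?W = [Pw y]"
      by (cases "substp q1 ?W"; simp add: Cons_eq_append_conv append_eq_Cons_conv)+
    moreover have "\<exists>v. q = Pw v" if "substp q ?W = [Pw c]" for q c
      using that by (cases q rule: nstar.cases) simp_all
    ultimately obtain v1 v2 where "q1 = Pw v1" "q2 = Pw v2" by blast
    with 2 show ?thesis by simp
  qed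
qed

section \<open>Polynomials: leading words, products with monomials, substitution\<close>

text \<open>Over the zero ring nothing is monic, so compositions only matter when 1 \<noteq> 0.\<close>
lemma monic_one_neq_zero: "monic (f :: ('x::wellorder, 'k::comm_ring_1) poly) \<Longrightarrow> (1::'k) \<noteq> 0"
  by (auto simp: monic_def supp_def)

lemma rbrel_supp:
  "rbrel lam x y v \<noteq> 0 \<Longrightarrow> v \<in> {[Pw x, Pw y], [Pw (Pw x # y)], [Pw (x @ [Pw y])], [Pw (x @ y)]}"
  by (auto simp: rbrel_def mon_def split: if_splits)

text \<open>The leading word of a relation is P(x)P(y): every other monomial has one top-level P.\<close>
lemma lead_rbrel:
  assumes "(1::'k::comm_ring_1) \<noteq> 0"
  shows "lead (rbrel (lam::'k) x y :: ('x::wellorder, 'k) poly) = [Pw x, Pw y]"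
proof -
  let ?W = "[Pw x, Pw y] :: 'x word"
  let ?f = "rbrel lam x y :: ('x, 'k) poly"
  have W: "?W \<in> supp ?f" using assms by (simp add: supp_def rbrel_def mon_def)
  have one: "tcount v = 1" if "v \<in> supp ?f" "v \<noteq> ?W" for v
    using that rbrel_supp[of lam x y v] by (auto simp: supp_def)
  show ?thesis unfolding lead_def
  proof (rule the_equality)
    have "wless v ?W" if "v \<in> supp ?f" "v \<noteq> ?W" for v
      using one[OF that] by (intro wless.tless) simp
    with W show "?W \<in> supp ?f \<and> (\<forall>v\<in>supp ?f. v \<noteq> ?W \<longrightarrow> wless v ?W)"
      by blast
  next
    fix w assume "w \<in> supp ?f \<and> (\<forall>v\<in>supp ?f. v \<noteq> w \<longrightarrow> wless v w)"
    then have w: "w \<in> supp ?f" and max: "\<And>v. v \<in> supp ?f \<Longrightarrow> v \<noteq> w \<Longrightarrow> wless v w"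
      by auto
    show "w = ?W"
    proof (rule ccontr)
      assume ne: "w \<noteq> ?W"
      then have "wless ?W w" using max[OF W] by simp
      then have "tcount ?W \<le> tcount w" by (rule wless_tcount_le)
      moreover have "tcount w = 1" using one[OF w ne] .
      ultimately show False by simp
    qed
  qed
qed

lemma pmul_mon_mon: "pmul (mon A) (mon B) w = (mon (A @ B) w :: 'k::comm_ring_1)"
proof -
  have "(\<Sum>i\<le>length w. mon A (take i w) * mon B (drop i w) :: 'k) =
        (\<Sum>i\<le>length w. if i = length A \<and> w = A @ B then 1 else 0)"
  proof (rule sum.cong)
    fix i assume "i \<in> {..length w}"
    then have "(take i w = A \<and> drop i w = B) \<longleftrightarrow> (i = length A \<and> w = A @ B)"
      by (auto simp: min_def)
    then show "mon A (take i w) * mon B (drop i w) = (if i = length A \<and> w = A @ B then 1 else (0::'k))"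
      by (auto simp: mon_def)
  qed simp
  also have "\<dots> = mon (A @ B) w" by (auto simp: mon_def)
  finally show ?thesis by (simp add: pmul_def)
qed

lemma pmul_rbrel_mon: "pmul (rbrel lam x y) (mon B) w =
   mon ([Pw x, Pw y] @ B) w - mon ([Pw (Pw x # y)] @ B) w
   - mon ([Pw (x @ [Pw y])] @ B) w - lam * mon ([Pw (x @ y)] @ B) w"
proof -
  have "pmul (rbrel lam x y) (mon B) w = pmul (mon [Pw x, Pw y]) (mon B) w
     - pmul (mon [Pw (Pw x # y)]) (mon B) w - pmul (mon [Pw (x @ [Pw y])]) (mon B) w
     - lam * pmul (mon [Pw (x @ y)]) (mon B) w"
    by (simp add: pmul_def rbrel_def algebra_simps sum_subtractf sum_distrib_left sum.distrib)
  then show ?thesis by (simp only: pmul_mon_mon)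
qed

lemma pmul_mon_rbrel: "pmul (mon B) (rbrel lam x y) w =
   mon (B @ [Pw x, Pw y]) w - mon (B @ [Pw (Pw x # y)]) w
   - mon (B @ [Pw (x @ [Pw y])]) w - lam * mon (B @ [Pw (x @ y)]) w"
proof -
  have "pmul (mon B) (rbrel lam x y) w = pmul (mon B) (mon [Pw x, Pw y]) w
     - pmul (mon B) (mon [Pw (Pw x # y)]) w - pmul (mon B) (mon [Pw (x @ [Pw y])]) w
     - lam * pmul (mon B) (mon [Pw (x @ y)]) w"
    by (simp add: pmul_def rbrel_def algebra_simps sum_subtractf sum_distrib_left sum.distrib)
  then show ?thesis by (simp only: pmul_mon_mon)
qed

lemma substpoly_image: "inj (substw u) \<Longrightarrow> substpoly u p (substw u v) = p v"
proof -
  assume "inj (substw u)"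
  then have "{v' \<in> supp p. substw u v' = substw u v} = (if v \<in> supp p then {v} else {})"
    by (auto simp: inj_eq)
  then show ?thesis by (auto simp: substpoly_def supp_def)
qed

lemma substpoly_bare: "substpoly [Ltr None] p w = p w"
  using substpoly_image[of "[Ltr None]" p w] by (simp add: inj_on_def)

lemma substpoly_outside: "w \<notin> range (substw u) \<Longrightarrow> substpoly u p w = 0"
  by (auto simp: substpoly_def intro!: sum.neutral)

lemma substpoly_rbrel:
  fixes lam :: "'k::comm_ring_1"
  assumes "nstars u = 1"
  shows "substpoly u (rbrel lam a b) w = mon (substw u [Pw a, Pw b]) w - mon (substw u [Pw (Pw a # b)]) w
     - mon (substw u [Pw (a @ [Pw b])]) w - lam * mon (substw u [Pw (a @ b)]) w"
proof (cases "w \<in> range (substw u)")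
  case True
  moreover have inj: "inj (substw u)" using assms by (rule substw_inj)
  ultimately obtain v where "w = substw u v" by auto
  with inj show ?thesis by (simp add: substpoly_image rbrel_def mon_def inj_eq)
next
  case False
  then have "mon (substw u v) w = (0::'k)" for v by (auto simp: mon_def)
  with False show ?thesis by (simp add: substpoly_outside)
qed

section \<open>Compositions of the relations\<close>

lemma cong_mod_zeroI:
  assumes "\<forall>(a, u, s)\<in>set ts. s \<in> S \<and> starw u \<and> wless (substw u (lead s)) w"
    and "\<And>v. p v = sum_list (map (\<lambda>(a, u, s). a * substpoly u s v) ts)"
  shows "cong_mod S w p (\<lambda>_. 0)"
  using assms unfolding cong_mod_def by (intro exI[of _ ts]) simp

lemma rb_overlap:
  assumes "wfw a" "wfw b" and "[Pw x, Pw y] @ a = b @ [Pw x', Pw y']"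
    and "length a < 2"
  shows "a = [Pw y'] \<and> b = [Pw x] \<and> x' = y"
proof -
  have "length a = length b" using arg_cong[OF assms(3), of length] by simp
  moreover have "0 < length a" using assms(1) by (simp add: wfw_def)
  ultimately have "length a = 1" "length b = 1" using assms(4) by linarith+
  then obtain a1 b1 where "a = [a1]" "b = [b1]" by (auto simp: length_Suc_conv)
  with assms(3) show ?thesis by simp
qed

lemma starw_bare: "starw [Ltr None]"
  by (simp add: starw_def wfw_def)

text \<open>Intersection composition: with w = P(x)P(y)P(z),
  f P(z) - P(x) g = - R(P(x)y, z) - R(xP(y), z) - lam R(xy, z) + R(x, P(y)z) + R(x, yP(z))
     + lam R(x, yz) + P(\<star> z)|R(x,y) - P(x \<star>)|R(y,z),
  where R(a, b) is the relation for a, b; all leading words have at most two top-level P's.\<close>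
lemma rbrel_intersection_composition:
  fixes lam :: "'k::comm_ring_1" and x y z :: "'x::wellorder word"
  assumes inS: "\<And>a b. wfw a \<Longrightarrow> wfw b \<Longrightarrow> rbrel lam a b \<in> S"
    and nt: "(1::'k) \<noteq> 0" and wf: "wfw x" "wfw y" "wfw z"
  shows "cong_mod S [Pw x, Pw y, Pw z]
    (\<lambda>v. pmul (rbrel lam x y) (mon [Pw z]) v - pmul (mon [Pw x]) (rbrel (lam::'k) y z) v)
    (\<lambda>_. 0 :: 'k)"
proof (rule cong_mod_zeroI)
  define ts :: "('k \<times> 'x option word \<times> ('x::wellorder, 'k) poly) list" where
    "ts = [(-1, [Ltr None], rbrel lam (Pw x # y) z), (-1, [Ltr None], rbrel lam (x @ [Pw y]) z),
      (-lam, [Ltr None], rbrel lam (x @ y) z), (1, [Ltr None], rbrel lam x (Pw y # z)),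
      (1, [Ltr None], rbrel lam x (y @ [Pw z])), (lam, [Ltr None], rbrel lam x (y @ z)),
      (1, [Pw (Ltr None # lift z)], rbrel lam x y), (-1, [Pw (lift x @ [Ltr None])], rbrel lam y z)]"
  have "wfw (Pw x # y)" "wfw (x @ [Pw y])" "wfw (x @ y)" "wfw (Pw y # z)" "wfw (y @ [Pw z])"
    "wfw (y @ z)"
    using wf by (auto simp: wfw_def)
  with wf have in_S: "rbrel lam (Pw x # y) z \<in> S" "rbrel lam (x @ [Pw y]) z \<in> S"
    "rbrel lam (x @ y) z \<in> S" "rbrel lam x (Pw y # z) \<in> S" "rbrel lam x (y @ [Pw z]) \<in> S"
    "rbrel lam x (y @ z) \<in> S" "rbrel lam x y \<in> S" "rbrel lam y z \<in> S"
    by (simp_all add: inS)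
  have "starw [Pw (Ltr None # lift z)]" "starw [Pw (lift x @ [Ltr None])]"
    using wf wfp_lift[of z] wfp_lift[of x] by (simp_all add: starw_def wfw_def)
  moreover have "wless [a, b] [Pw x, Pw y, Pw z]" "wless [c] [Pw x, Pw y, Pw z]"
    for a b c :: "'x prim"
    by (simp_all add: wless_if_short)
  ultimately show "\<forall>(a, u, s)\<in>set ts. s \<in> S \<and> starw u \<and> wless (substw u (lead s)) [Pw x, Pw y, Pw z]"
    using in_S by (simp add: ts_def lead_rbrel[OF nt] starw_bare)
  show "\<And>v. pmul (rbrel lam x y) (mon [Pw z]) v - pmul (mon [Pw x]) (rbrel lam y z) v =
      sum_list (map (\<lambda>(a, u, s). a * substpoly u s v) ts)"
    by (simp add: ts_def pmul_rbrel_mon pmul_mon_rbrel substpoly_rbrel algebra_simps)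
qed

text \<open>Inclusion composition with u = P(v1)P(v2) and h = P(x')P(y'): writing
  a|h for substitution, f - u|g equals
  R(v1|h1, v2|h1) + R(v1|h2, v2|h2) + lam R(v1|h3, v2|h3)
    - P(P(v1)v2)|g - P(v1 P(v2))|g - lam P(v1 v2)|g,
  where h1, h2, h3 are the three lower monomials of g.\<close>
lemma rbrel_inclusion_composition:
  fixes lam :: "'k::comm_ring_1" and x' y' :: "'x::wellorder word"
  assumes inS: "\<And>a b. wfw a \<Longrightarrow> wfw b \<Longrightarrow> rbrel lam a b \<in> S"
    and nt: "(1::'k) \<noteq> 0" and wf: "wfw x'" "wfw y'"
    and u: "starw [Pw v1, Pw v2]"
  defines "h \<equiv> [Pw x', Pw y']"
  shows "cong_mod S [Pw (substw v1 h), Pw (substw v2 h)]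
    (\<lambda>v. rbrel lam (substw v1 h) (substw v2 h) v - substpoly [Pw v1, Pw v2] (rbrel (lam::'k) x' y') v)
    (\<lambda>_. 0 :: 'k)"
proof (rule cong_mod_zeroI)
  let ?g = "rbrel lam x' y' :: ('x::wellorder, 'k) poly"
  let ?R = "\<lambda>h. rbrel lam (substw v1 h) (substw v2 h) :: ('x, 'k) poly"
  define h1 h2 h3 where "h1 = [Pw (Pw x' # y')]" and "h2 = [Pw (x' @ [Pw y'])]"
    and "h3 = [Pw (x' @ y')]"
  define ts :: "('k \<times> 'x option word \<times> ('x, 'k) poly) list" where
    "ts = [(1, [Ltr None], ?R h1), (1, [Ltr None], ?R h2), (lam, [Ltr None], ?R h3),
      (-1, [Pw (Pw v1 # v2)], ?g), (-1, [Pw (v1 @ [Pw v2])], ?g), (-lam, [Pw (v1 @ v2)], ?g)]"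
  have wv: "wfw v1" "wfw v2" and ns: "nstars v1 + nstars v2 = 1"
    using u by (auto simp: starw_def wfw_def)
  have "wfw h1" "wfw h2" "wfw h3" using wf by (auto simp: h1_def h2_def h3_def wfw_def)
  with wv have inS_R: "?R h1 \<in> S" "?R h2 \<in> S" "?R h3 \<in> S"
    by (auto intro: inS wfw_substw)
  have "wfw h" using wf by (simp add: h_def wfw_def)
  with wf have g_in: "?g \<in> S" and lead_g: "lead ?g = h"
    by (simp_all add: inS lead_rbrel[OF nt] h_def)
  have lead_R: "lead (?R k) = [Pw (substw v1 k), Pw (substw v2 k)]" for k
    by (rule lead_rbrel[OF nt])
  have "tcount h1 = 1" "tcount h2 = 1" "tcount h3 = 1" by (simp_all add: h1_def h2_def h3_def)
  then have R_below: "wless [Pw (substw v1 k), Pw (substw v2 k)] [Pw (substw v1 h), Pw (substw v2 h)]"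
    if "k \<in> {h1, h2, h3}" for k
    using that substw_mono[of "[Pw v1, Pw v2]" k h] ns by (auto simp: h_def)
  have g_below: "wless [c] [Pw a, Pw b]" for a b :: "'x word" and c
    by (simp add: wless_if_short)
  have "starw [Pw (Pw v1 # v2)]" "starw [Pw (v1 @ [Pw v2])]" "starw [Pw (v1 @ v2)]"
    using wv ns by (auto simp: starw_def wfw_def)
  with inS_R g_in show "\<forall>(a, w, s)\<in>set ts. s \<in> S \<and> starw w \<and>
      wless (substw w (lead s)) [Pw (substw v1 h), Pw (substw v2 h)]"
    by (simp add: ts_def lead_R lead_g starw_bare R_below g_below)
  show "\<And>v. ?R h v - substpoly [Pw v1, Pw v2] ?g v =
      sum_list (map (\<lambda>(a, u, s). a * substpoly u s v) ts)"
    using ns u by (simp add: ts_def substpoly_rbrel starw_def;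
        simp add: rbrel_def h_def h1_def h2_def h3_def algebra_simps)
qed

lemma rbrel_compositions:
  fixes lam :: "'k::comm_ring_1" and x y x' y' :: "'x::wellorder word"
  assumes inS: "\<And>a b. wfw a \<Longrightarrow> wfw b \<Longrightarrow> rbrel lam a b \<in> S"
    and nt: "(1::'k) \<noteq> 0" and wf: "wfw x" "wfw y" "wfw x'" "wfw y'"
  defines "f \<equiv> rbrel lam x y" and "g \<equiv> rbrel lam x' y'"
  shows "(\<forall>w a b. wfw a \<and> wfw b \<and> w = lead f @ a \<and> w = b @ lead g \<and>
        bre w < bre (lead f) + bre (lead g) \<longrightarrow>
        cong_mod S w (\<lambda>v. pmul f (mon a) v - pmul (mon b) g v) (\<lambda>_. 0)) \<and>
      (\<forall>w u. starw u \<and> w = lead f \<and> w = substw u (lead g) \<longrightarrow>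
        cong_mod S w (\<lambda>v. f v - substpoly u g v) (\<lambda>_. 0))"
proof -
  have lead: "lead f = [Pw x, Pw y]" "lead g = [Pw x', Pw y']"
    unfolding f_def g_def by (simp_all add: lead_rbrel[OF nt])
  show ?thesis
  proof (intro conjI allI impI; elim conjE)
    fix w a b assume "wfw a" "wfw b" "w = lead f @ a" "w = b @ lead g"
      and "bre w < bre (lead f) + bre (lead g)"
    with lead have "[Pw x, Pw y] @ a = b @ [Pw x', Pw y']" "length a < 2"
      by (simp_all add: bre_def)
    with \<open>wfw a\<close> \<open>wfw b\<close> have a: "a = [Pw y']" and "b = [Pw x]" and "x' = y"
      using rb_overlap by (metis (no_types))+
    moreover have "w = [Pw x, Pw y, Pw y']" using \<open>w = lead f @ a\<close> lead a by simp
    ultimately show "cong_mod S w (\<lambda>v. pmul f (mon a) v - pmul (mon b) g v) (\<lambda>_. 0)"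
      using rbrel_intersection_composition[OF inS nt wf(1,2,4)] by (simp add: f_def g_def)
  next
    fix w u assume u: "starw u" and "w = lead f" "w = substw u (lead g)"
    with lead have inst: "substw u [Pw x', Pw y'] = [Pw x, Pw y]" "w = [Pw x, Pw y]" by simp_all
    from two_prime_instance[OF u inst(1)]
    show "cong_mod S w (\<lambda>v. f v - substpoly u g v) (\<lambda>_. 0)"
    proof (elim disjE exE)
      assume "u = [Ltr None]"
      with inst show ?thesis
        by (intro cong_mod_zeroI[of "[]"]) (auto simp: f_def g_def substpoly_bare)
    next
      fix v1 v2 assume u_prod: "u = [Pw v1, Pw v2]"
      with inst have "x = substw v1 [Pw x', Pw y']" "y = substw v2 [Pw x', Pw y']" by simp_all
      with inst(2) u u_prod show ?thesis
        using rbrel_inclusion_composition[OF inS nt wf(3,4), of v1 v2] by (simp add: f_def g_def)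
    qed
  qed
qed

theorem theorem4p1:
  fixes lam :: "'k::comm_ring_1"
  shows "GSB {(rbrel lam x y :: ('x::wellorder, 'k) poly) | x y. wfw x \<and> wfw y}"
proof -
  let ?S = "{(rbrel lam x y :: ('x, 'k) poly) | x y. wfw x \<and> wfw y}"
  have inS: "\<And>a b. wfw a \<Longrightarrow> wfw b \<Longrightarrow> rbrel lam a b \<in> ?S" by blast
  text \<open>Monic polynomials only exist when 1 \<noteq> 0, the hypothesis of the compositions.\<close>
  show ?thesis
    unfolding GSB_def
    by (intro ballI impI, elim CollectE exE conjE, hypsubst, rule rbrel_compositions[OF inS])
      (auto dest: monic_one_neq_zero)
qed

end
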